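(* If $s$ is a normalized fully ternary string of length $n$ which is good (in the sense defined in the context), then $d_{\rm g}(s)=n-3$.
   Context: Strings are finite words over $\{0,1,2,\dots\}$. A string is \emph{normalized} if no two adjacent symbols are equal; the \emph{normalization} of a string replaces every maximal run of identical symbols by a single copy. A string is \emph{fully $k$-ary} if the set of symbols occurring in it is exactly $\{0,\dots,k-1\}$; fully ternary means fully $3$-ary. For a normalized string $s=s_1\cdots s_n$ and $1\le i\le n$, the flip $f^{(i)}(s)$ is the normalization of $s_i\cdots s_1 s_{i+1}\cdots s_n$. The grouping distance $d_{\rm g}(s)$ of a normalized fully $k$-ary string is the minimum number of flips needed to transform $s$ into a string of length $k$. Regular-expression notation: $w^i$ is $i$ repetitions of $w$, $w^*$ is zero or more, $w^+$ one or more, $w^{\ge 2}$ two or more repetitions; $\{a,b\}$ denotes a single symbol that is either $a$ or $b$ (chosen independently at each occurrence). A normalized fully ternary string is \emph{bad} (for grouping) if, after some relabelling (bijection) of the symbols $\{0,1,2\}$, it is of one of the following types: (I) $0(12)^{\ge 2}$ or $02(12)^+$; (II) $(\{0,1\}2)^+$ or $(2\{0,1\})^+2$; (III) $0(21)^+02(12)^*$; (IV) one of the eight strings $210212$, $021012$, $0120212$, $1201212$, $02101212$, $20210212$, $020210212$, $120120212$. All other normalized fully ternary strings are \emph{good}. *)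

theory Defs
  imports Main
begin

definition normalized :: "nat list \<Rightarrow> bool" where
  "normalized s \<longleftrightarrow> (\<forall>i. Suc i < length s \<longrightarrow> s ! i \<noteq> s ! Suc i)"

definition normalization :: "nat list \<Rightarrow> nat list" where
  "normalization s = remdups_adj s"

definition fully_kary :: "nat \<Rightarrow> nat list \<Rightarrow> bool" where
  "fully_kary k s \<longleftrightarrow> set s = {0..<k}"

text \<open>Flip f^(i)(s), meaningful for 1 <= i <= length s.\<close>
definition flip :: "nat \<Rightarrow> nat list \<Rightarrow> nat list" where
  "flip i s = normalization (rev (take i s) @ drop i s)"

fun reach :: "nat list \<Rightarrow> nat \<Rightarrow> nat list \<Rightarrow> bool" where
  "reach s 0 t = (t = s)"
| "reach s (Suc m) t = (\<exists>i. 1 \<le> i \<and> i \<le> length s \<and> reach (flip i s) m t)"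

definition grouping_distance :: "nat \<Rightarrow> nat list \<Rightarrow> nat" where
  "grouping_distance k s = (LEAST m. \<exists>t. reach s m t \<and> length t = k)"

definition rep :: "nat \<Rightarrow> nat list \<Rightarrow> nat list" where
  "rep j w = concat (replicate j w)"

definition typeI :: "nat list set" where
  "typeI = {[0] @ rep j [1,2] | j. j \<ge> 2} \<union> {[0,2] @ rep j [1,2] | j. j \<ge> 1}"

definition typeII :: "nat list set" where
  "typeII = {concat (map (\<lambda>x. [x,2]) xs) | xs. xs \<noteq> [] \<and> set xs \<subseteq> {0,1}}
          \<union> {concat (map (\<lambda>x. [2,x]) xs) @ [2] | xs. xs \<noteq> [] \<and> set xs \<subseteq> {0,1}}"

definition typeIII :: "nat list set" where
  "typeIII = {[0] @ rep a [2,1] @ [0,2] @ rep b [1,2] | a b. a \<ge> 1}"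

definition typeIV :: "nat list set" where
  "typeIV = {[2,1,0,2,1,2], [0,2,1,0,1,2], [0,1,2,0,2,1,2], [1,2,0,1,2,1,2],
             [0,2,1,0,1,2,1,2], [2,0,2,1,0,2,1,2], [0,2,0,2,1,0,2,1,2],
             [1,2,0,1,2,0,2,1,2]}"

definition bad :: "nat list \<Rightarrow> bool" where
  "bad s \<longleftrightarrow> (\<exists>\<sigma>. bij_betw \<sigma> {0,1,2} {0,1,2} \<and>
      map \<sigma> s \<in> typeI \<union> typeII \<union> typeIII \<union> typeIV)"

definition good :: "nat list \<Rightarrow> bool" where
  "good s \<longleftrightarrow> \<not> bad s"

end

theory Submission
  imports Defs
begin

text \<open>
  A flip shortens a normalized string by at most one symbol, so at least \<open>n - 3\<close> flips are needed.
  Conversely, flipping the prefix that ends at a later occurrence (a return) of the first symbol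
  merges the two copies and shortens the string by exactly one. Every string of one of four
  relabelling-invariant shapes is bad, so it suffices to show that a string of no bad shape and
  length at least 4 has a return flip whose result again has no bad shape.

  For strings of length at most 10 this is checked by evaluation, after relabelling so that the
  string starts with 0 1. For a longer string \<open>s = a u a w\<close>, where \<open>u\<close> alternates between \<open>p\<close> and
  \<open>q\<close>, suppose that every return flip gives a bad shape. The flip at the first return gives
  \<open>rev u a w\<close>, which is too long for type IV. According to whether it has the shape of type I, II
  or III, either \<open>s\<close> itself has a bad shape or the flip at a later return leads to a string of
  none of the shapes.
\<close>

section \<open>Flips at returns\<close>

lemma normalized_iff_distinct_adj: "normalized s \<longleftrightarrow> distinct_adj s"
  by (simp add: normalized_def distinct_adj_conv_nth)

lemma remdups_adj_append_distinct_adj: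
  assumes "distinct_adj xs" "distinct_adj ys"
  shows "remdups_adj (xs @ ys) =
    xs @ (if xs \<noteq> [] \<and> ys \<noteq> [] \<and> last xs = hd ys then tl ys else ys)"
proof (cases "xs \<noteq> [] \<and> ys \<noteq> [] \<and> last xs = hd ys")
  case True
  then obtain xs' x ys' where xs: "xs = xs' @ [x]" and ys: "ys = x # ys'"
    by (cases xs rule: rev_cases; cases ys) auto
  have "remdups_adj (xs' @ x # x # ys') = remdups_adj (xs' @ [x]) @ tl (remdups_adj (x # x # ys'))"
    by (rule remdups_adj_append)
  also have "\<dots> = xs @ ys'"
    using assms by (simp add: xs ys distinct_adj_altdef)
  finally show ?thesis
    using True by (simp add: xs ys)
next
  case False
  then have "remdups_adj (xs @ ys) = remdups_adj xs @ remdups_adj ys"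
    by (intro remdups_adj_append') auto
  with False show ?thesis
    using assms by (subst if_not_P) (simp_all add: distinct_adj_altdef)
qed

lemma remdups_adj_map_inj_on:
  "inj_on f (set xs) \<Longrightarrow> remdups_adj (map f xs) = map f (remdups_adj xs)"
  by (induction xs rule: remdups_adj.induct) (auto dest: inj_onD)

lemma set_flip [simp]: "set (flip i s) = set s"
  by (metis flip_def normalization_def remdups_adj_set append_take_drop_id set_append set_rev)

lemma distinct_adj_flip: "distinct_adj (flip i s)"
  by (simp add: flip_def normalization_def)

lemma length_flip_ge:
  assumes "distinct_adj s"
  shows "length s \<le> Suc (length (flip i s))"
proof -
  have "distinct_adj (rev (take i s))" "distinct_adj (drop i s)"
    using assms by (metis append_take_drop_id distinct_adj_append_iff distinct_adj_rev)+
  then show ?thesis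
    by (simp add: flip_def normalization_def remdups_adj_append_distinct_adj min_def)
qed

lemma flip_map:
  assumes "inj_on f (set s)"
  shows "flip i (map f s) = map f (flip i s)"
proof -
  have inj: "inj_on f (set (rev (take i s) @ drop i s))"
    using assms by (metis append_take_drop_id set_append set_rev)
  have "flip i (map f s) = remdups_adj (map f (rev (take i s) @ drop i s))"
    unfolding flip_def normalization_def by (simp add: take_map drop_map rev_map)
  also have "\<dots> = map f (flip i s)"
    unfolding flip_def normalization_def by (rule remdups_adj_map_inj_on[OF inj])
  finally show ?thesis .
qed

lemma flip_at_return:
  assumes "distinct_adj (a # u @ a # w)"
  shows "flip (Suc (length u)) (a # u @ a # w) = rev u @ a # w"
proof -
  have "distinct_adj (rev (a # u))" "distinct_adj (a # w)"
    using assms distinct_adj_appendD1[of "a # u"] distinct_adj_appendD2[of "a # u"]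
    by (simp_all only: append_Cons distinct_adj_rev)
  then have "remdups_adj ((rev u @ [a]) @ a # w) = (rev u @ [a]) @ w"
    by (subst remdups_adj_append_distinct_adj) auto
  then show ?thesis
    by (simp add: flip_def normalization_def)
qed

lemma return_decomposition:
  assumes "0 < k" "k < length s" "s ! k = s ! 0"
  obtains a u w where "s = a # u @ a # w" "k = Suc (length u)"
proof -
  obtain x xs j where s: "s = x # xs" and k: "k = Suc j"
    using assms by (cases s; cases k) auto
  then have "xs = take j xs @ x # drop (Suc j) xs"
    using assms id_take_nth_drop[of j xs] by simp
  with that[of x "take j xs" "drop (Suc j) xs"] show ?thesis
    using assms s k by simp
qed

lemma reach_length_ge: "distinct_adj s \<Longrightarrow> reach s m t \<Longrightarrow> length s \<le> length t + m"
proof (induction m arbitrary: s)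
  case (Suc m)
  then obtain i where "reach (flip i s) m t"
    by auto
  with Suc.IH[OF distinct_adj_flip this] length_flip_ge[OF Suc.prems(1), of i] show ?case
    by simp
qed simp

section \<open>Alternating words\<close>

fun alternating :: "'a \<Rightarrow> 'a \<Rightarrow> nat \<Rightarrow> 'a list" where
  "alternating x y 0 = []"
| "alternating x y (Suc n) = x # alternating y x n"

lemma length_alternating [simp]: "length (alternating x y n) = n"
  by (induction n arbitrary: x y) auto

lemma alternating_eq_Nil_iff [simp]: "alternating x y n = [] \<longleftrightarrow> n = 0"
  by (cases n) auto

lemma nth_alternating: "i < n \<Longrightarrow> alternating x y n ! i = (if even i then x else y)"
  by (induction n arbitrary: x y i) (auto simp: nth_Cons split: nat.splits)

lemma set_alternating_subset: "set (alternating x y n) \<subseteq> {x, y}"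
  by (induction n arbitrary: x y) auto

lemma map_alternating: "map f (alternating x y n) = alternating (f x) (f y) n"
  by (induction n arbitrary: x y) auto

lemma alternating_add:
  "alternating x y (m + n) = alternating x y m @ (if even m then alternating x y n else alternating y x n)"
  by (induction m arbitrary: x y) auto

lemma alternating_double: "alternating x y (2 * k) = rep k [x, y]"
  by (induction k) (auto simp: rep_def)

lemma rev_alternating: "rev (alternating x y n) = (if even n then alternating y x n else alternating x y n)"
proof (induction n arbitrary: x y)
  case (Suc n)
  have "alternating x y (Suc n) = alternating x y n @ [if even n then x else y]"
    using alternating_add[of x y n 1] by simp
  with Suc[of y x] Suc[of x y] show ?case
    by auto
qed simp

lemma last_alternating: "0 < n \<Longrightarrow> last (alternating x y n) = (if odd n then x else y)"
  using nth_alternating[of "n - 1" n x y] by (simp add: last_conv_nth)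

lemma alternating_unique:
  "distinct_adj v \<Longrightarrow> set v \<subseteq> {x, y} \<Longrightarrow> v \<noteq> [] \<Longrightarrow> hd v = x \<Longrightarrow> v = alternating x y (length v)"
proof (induction v arbitrary: x y)
  case (Cons a v)
  show ?case
  proof (cases v)
    case (Cons b w)
    with Cons.prems have "b = y"
      by auto
    with Cons.prems \<open>v = b # w\<close> have "v = alternating y x (length v)"
      by (intro Cons.IH) (auto simp: distinct_adj_Cons)
    with Cons.prems show ?thesis
      by simp
  qed (use Cons.prems in simp)
qed simp

section \<open>Shapes of bad strings\<close>

definition relabel :: "nat \<Rightarrow> nat \<Rightarrow> nat \<Rightarrow> nat" where
  "relabel A B z = (if z = A then 0 else if z = B then 1 else 2)"

lemma third_symbol:
  assumes "A \<noteq> B" "A \<le> 2" "B \<le> (2::nat)"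
  obtains C where "C \<le> 2" "C \<noteq> A" "C \<noteq> B" "\<And>z. z \<le> 2 \<Longrightarrow> z = A \<or> z = B \<or> z = C"
proof (rule that[of "3 - A - B"])
  show "z = A \<or> z = B \<or> z = 3 - A - B" if "z \<le> 2" for z
    using assms that by arith
qed (use assms in arith)+

lemma bij_betw_relabel:
  assumes "A \<noteq> B" "A \<le> 2" "B \<le> 2"
  shows "bij_betw (relabel A B) {0,1,2} {0,1,2}"
proof -
  obtain C where C: "C \<le> 2" "C \<noteq> A" "C \<noteq> B" "\<And>z. z \<le> 2 \<Longrightarrow> z = A \<or> z = B \<or> z = C"
    using third_symbol[OF assms] by blast
  then have "{0,1,2} = {A, B, C}"
    using assms by fastforce
  moreover have "bij_betw (relabel A B) {A, B, C} {0,1,2}"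
    using assms C by (auto simp: bij_betw_def relabel_def)
  ultimately show ?thesis
    by simp
qed

lemma bad_if_relabelled:
  assumes "A \<noteq> B" "A \<le> 2" "B \<le> 2" "map (relabel A B) s \<in> typeI \<union> typeII \<union> typeIII"
  shows "bad s"
  using assms bij_betw_relabel[OF assms(1-3)] unfolding bad_def by blast

definition perms3 :: "nat list list" where
  "perms3 = [[0,1,2], [0,2,1], [1,0,2], [1,2,0], [2,0,1], [2,1,0]]"

lemma set_perms3: "set perms3 = {p. distinct p \<and> set p = {0,1,2}}"
proof (intro set_eqI iffI)
  fix p :: "nat list"
  assume "p \<in> {p. distinct p \<and> set p = {0,1,2}}"
  then have p: "distinct p" "set p = {0,1,2}"
    by auto
  then have "length p = 3"
    using distinct_card[of p] by simp
  then obtain a b c where "p = [a, b, c]"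
    unfolding numeral_3_eq_3 length_Suc_conv by auto
  moreover have "a \<in> {0,1,2}" "b \<in> {0,1,2}" "c \<in> {0,1,2}"
    using equalityD1[OF p(2)] by (simp_all add: \<open>p = [a, b, c]\<close>)
  ultimately show "p \<in> set perms3"
    using p(1) by (auto simp: perms3_def)
qed (auto simp: perms3_def)

lemma bij_betw_nth_perms3: "p \<in> set perms3 \<Longrightarrow> bij_betw ((!) p) {0,1,2} {0,1,2}"
  by (rule bij_betw_nth) (auto simp: set_perms3 perms3_def)

lemma map_in_perms3:
  fixes \<sigma> :: "nat \<Rightarrow> nat"
  assumes "bij_betw \<sigma> {0,1,2} {0,1,2}"
  shows "map \<sigma> [0,1,2] \<in> set perms3"
  using assms by (simp add: set_perms3 bij_betw_def distinct_map)

text \<open>Descriptions of the four bad types that do not depend on the labelling of the symbols.\<close>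

definition typeI_shape :: "nat list \<Rightarrow> bool" where
  "typeI_shape s \<longleftrightarrow> 4 \<le> length s \<and> hd s \<notin> set (tl s)"

definition typeII_shape :: "nat list \<Rightarrow> bool" where
  "typeII_shape s \<longleftrightarrow> (\<forall>i<length s. even (length s - 1 - i) \<longrightarrow> s ! i = last s)"

definition typeIII_shape :: "nat list \<Rightarrow> bool" where
  "typeIII_shape s \<longleftrightarrow> (\<exists>A B C a b. 1 \<le> a \<and> s = A # rep a [C, B] @ A # C # rep b [B, C])"

definition typeIV_shape :: "nat list \<Rightarrow> bool" where
  "typeIV_shape s \<longleftrightarrow> (\<exists>p\<in>set perms3. map ((!) p) s \<in> typeIV)"

definition bad_shape :: "nat list \<Rightarrow> bool" where
  "bad_shape s \<longleftrightarrow> typeI_shape s \<or> typeII_shape s \<or> typeIII_shape s \<or> typeIV_shape s"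

lemma bad_if_typeI_shape:
  assumes "distinct_adj s" "set s \<subseteq> {0,1,2}" "typeI_shape s"
  shows "bad s"
proof -
  obtain A v where s: "s = A # v" and A: "A \<notin> set v" and v: "3 \<le> length v"
    using assms(3) by (cases s) (auto simp: typeI_shape_def)
  define B where "B = hd v"
  have "B \<in> set v"
    using v unfolding B_def by (intro hd_in_set) auto
  then have AB: "A \<noteq> B" "A \<le> 2" "B \<le> 2"
    using assms(2) s A by auto
  obtain C where C: "C \<le> 2" "C \<noteq> A" "C \<noteq> B" "\<And>z. z \<le> 2 \<Longrightarrow> z = A \<or> z = B \<or> z = C"
    using third_symbol[OF AB] by blast
  have "set v \<subseteq> {B, C}"
  proof
    fix z
    assume "z \<in> set v"
    then have "z \<le> 2" "z \<noteq> A"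
      using assms(2) s A by auto
    with C(4) show "z \<in> {B, C}"
      by blast
  qed
  moreover have "distinct_adj v"
    using assms(1) unfolding s by (rule distinct_adj_ConsD)
  ultimately have v_alt: "v = alternating B C (length v)"
    using v by (intro alternating_unique) (auto simp: B_def)
  have AB_image: "map (relabel A B) s = 0 # alternating 1 2 (length v)"
    and AC_image: "map (relabel A C) s = 0 # alternating 2 1 (length v)"
    using AB C by (subst s, subst v_alt, simp add: map_alternating relabel_def)+
  show ?thesis
  proof (cases "even (length v)")
    case True
    then obtain k where "length v = 2 * k" "2 \<le> k"
      using v by (auto elim!: evenE)
    with AB_image AB show ?thesis
      by (intro bad_if_relabelled[of A B]) (auto simp: typeI_def alternating_double)
  next
    case False
    then obtain k where "length v = Suc (2 * k)" "1 \<le> k"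
      using v by (auto elim!: oddE)
    with AC_image AB C show ?thesis
      by (intro bad_if_relabelled[of A C]) (auto simp: typeI_def alternating_double)
  qed
qed

lemma concat_pairs_if_alternating_last:
  assumes "\<forall>i<length r. r ! i = c \<longleftrightarrow> even (length r - 1 - i)" "even (length r)"
  obtains xs where "r = concat (map (\<lambda>x. [x, c]) xs)" "c \<notin> set xs"
  using assms
proof (induction r arbitrary: thesis rule: induct_list012)
  case (3 x y zs)
  have "\<forall>i<length zs. zs ! i = c \<longleftrightarrow> even (length zs - 1 - i)"
  proof (intro allI impI)
    fix i
    assume "i < length zs"
    then show "zs ! i = c \<longleftrightarrow> even (length zs - 1 - i)"
      using "3.prems"(2)[rule_format, of "Suc (Suc i)"] by simp
  qed
  then obtain xs where "zs = concat (map (\<lambda>x. [x, c]) xs)" "c \<notin> set xs"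
    using "3.IH"(1) "3.prems"(3) by auto
  moreover have "x \<noteq> c" "y = c"
    using "3.prems"(2)[rule_format, of 0] "3.prems"(2)[rule_format, of 1] "3.prems"(3) by auto
  ultimately show ?case
    using "3.prems"(1)[of "x # xs"] by simp
qed auto

lemma typeII_shape_Cons_Cons_alternating:
  assumes "odd n"
  shows "typeII_shape (x # y # alternating x z n)"
  unfolding typeII_shape_def
proof (intro allI impI)
  fix i
  assume i: "i < length (x # y # alternating x z n)" "even (length (x # y # alternating x z n) - 1 - i)"
  have last: "last (x # y # alternating x z n) = x"
    using assms odd_pos[OF assms] by (simp add: last_alternating del: alternating.simps)
  show "(x # y # alternating x z n) ! i = last (x # y # alternating x z n)"
  proof (cases "i < 2")
    case True
    with i assms show ?thesis
      unfolding last by (auto simp: less_2_cases_iff simp del: alternating.simps)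
  next
    case False
    then obtain j where "i = Suc (Suc j)"
      by (intro that[of "i - 2"]) simp
    with i assms show ?thesis
      unfolding last by (auto simp: nth_alternating simp del: alternating.simps)
  qed
qed

lemma typeII_if_last_pattern:
  assumes "set r \<subseteq> {0,1,2}" "2 \<le> length r" "\<forall>i<length r. r ! i = 2 \<longleftrightarrow> even (length r - 1 - i)"
  shows "r \<in> typeII"
proof (cases "even (length r)")
  case True
  then obtain xs where xs: "r = concat (map (\<lambda>x. [x, 2]) xs)" "2 \<notin> set xs"
    using concat_pairs_if_alternating_last[OF assms(3)] by blast
  moreover from xs have "set xs \<subseteq> {0,1}" "xs \<noteq> []"
    using assms(1,2) by auto
  ultimately show ?thesis
    unfolding typeII_def by blast
next
  case False
  then obtain r' where r: "r = 2 # r'"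
    using assms(3)[rule_format, of 0] by (cases r) auto
  have "\<forall>i<length r'. r' ! i = 2 \<longleftrightarrow> even (length r' - 1 - i)"
  proof (intro allI impI)
    fix i
    assume "i < length r'"
    then show "r' ! i = 2 \<longleftrightarrow> even (length r' - 1 - i)"
      using assms(3)[rule_format, of "Suc i"] by (simp add: r)
  qed
  moreover have "even (length r')"
    using False r by simp
  ultimately obtain xs where xs: "r' = concat (map (\<lambda>x. [x, 2]) xs)" "2 \<notin> set xs"
    by (rule concat_pairs_if_alternating_last)
  moreover from xs have "set xs \<subseteq> {0,1}" "xs \<noteq> []"
    using assms(1,2) r by auto
  moreover have "2 # concat (map (\<lambda>x. [x, 2]) xs) = concat (map (\<lambda>x. [2, x]) xs) @ [2::nat]"
    by (induction xs) auto
  ultimately show ?thesis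
    unfolding typeII_def r by auto
qed

lemma nth_eq_last_iff_if_typeII_shape:
  assumes "distinct_adj s" "typeII_shape s" "i < length s"
  shows "s ! i = last s \<longleftrightarrow> even (length s - 1 - i)"
proof (cases "even (length s - 1 - i)")
  case True
  with assms(2,3) show ?thesis
    unfolding typeII_shape_def by blast
next
  case False
  then have "Suc i < length s \<and> even (length s - 1 - Suc i)"
    using assms(3) by presburger
  then have "s ! Suc i = last s" "s ! i \<noteq> s ! Suc i"
    using assms(2) distinct_adj_nth[OF assms(1)] unfolding typeII_shape_def by blast+
  with False show ?thesis
    by simp
qed

lemma bad_if_typeII_shape:
  assumes "distinct_adj s" "set s \<subseteq> {0,1,2}" "2 \<le> length s" "typeII_shape s"
  shows "bad s"
proof -
  define c where "c = last s"
  have "c \<in> set s"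
    using assms(3) unfolding c_def by (intro last_in_set) auto
  then have "c \<le> 2"
    using assms(2) by auto
  define A where "A = (if c = 0 then 1 else (0::nat))"
  have A: "A \<noteq> c" "A \<le> 2"
    by (simp_all add: A_def)
  obtain B where B: "B \<le> 2" "B \<noteq> A" "B \<noteq> c" "\<And>z. z \<le> 2 \<Longrightarrow> z = A \<or> z = c \<or> z = B"
    using third_symbol[OF A(1) A(2) \<open>c \<le> 2\<close>] by blast
  have "relabel A B (s ! i) = 2 \<longleftrightarrow> even (length s - 1 - i)" if "i < length s" for i
  proof -
    have "s ! i \<le> 2"
      using assms(2) nth_mem[OF that] by auto
    then have "relabel A B (s ! i) = 2 \<longleftrightarrow> s ! i = c"
      using A B by (auto simp: relabel_def)
    with nth_eq_last_iff_if_typeII_shape[OF assms(1,4) that] show ?thesis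
      by (simp add: c_def)
  qed
  then have "map (relabel A B) s \<in> typeII"
    using assms(3) by (intro typeII_if_last_pattern) (auto simp: relabel_def)
  with A B show ?thesis
    by (intro bad_if_relabelled[of A B]) auto
qed

lemma map_rep: "map f (rep k w) = rep k (map f w)"
  by (induction k) (auto simp: rep_def)

lemma set_rep_subset: "set (rep k w) \<subseteq> set w"
  by (induction k) (auto simp: rep_def)

lemma length_rep: "length (rep k w) = k * length w"
  by (induction k) (auto simp: rep_def)

lemma rep_Suc: "rep (Suc k) w = w @ rep k w"
  by (simp add: rep_def)

lemma typeIII_shape_distinct:
  assumes "set (A # rep a [C, B] @ A # C # rep b [B, C]) = {0,1,2}"
    and "distinct_adj (A # rep a [C, B] @ A # C # rep b [B, C])" "1 \<le> a"
  shows "A \<noteq> B" "A \<noteq> C" "B \<noteq> C"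
proof -
  have "set (A # rep a [C, B] @ A # C # rep b [B, C]) \<subseteq> {A, B, C}"
    using set_rep_subset[of a "[C, B]"] set_rep_subset[of b "[B, C]"] by auto
  then have "card {0,1,2::nat} \<le> card {A, B, C}"
    unfolding assms(1) by (intro card_mono) auto
  then show "A \<noteq> B"
    by (cases "A = C") (auto simp: card_insert_if)
  show "A \<noteq> C" "B \<noteq> C"
    using assms(2,3) by (auto simp: rep_Suc distinct_adj_append_iff dest!: Suc_le_D)
qed

lemma bad_if_typeIII_shape:
  assumes "distinct_adj s" "set s = {0,1,2}" "typeIII_shape s"
  shows "bad s"
proof -
  obtain A B C a b where a: "1 \<le> a" and s: "s = A # rep a [C, B] @ A # C # rep b [B, C]"
    using assms(3) unfolding typeIII_shape_def by blast
  have d: "A \<noteq> B" "A \<noteq> C" "B \<noteq> C"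
    using typeIII_shape_distinct[OF assms(2)[unfolded s] assms(1)[unfolded s] a] by simp_all
  have "A \<in> {0,1,2}" "B \<in> {0,1,2}"
    unfolding assms(2)[symmetric] s using a by (cases a; simp add: rep_Suc)+
  moreover have "map (relabel A B) s = 0 # rep a [2, 1] @ 0 # 2 # rep b [1, 2]"
    using d by (simp add: s map_rep relabel_def)
  ultimately show ?thesis
    using a d by (intro bad_if_relabelled[of A B]) (auto simp: typeIII_def)
qed

lemma bad_if_typeIV_shape: "typeIV_shape s \<Longrightarrow> bad s"
  unfolding typeIV_shape_def bad_def using bij_betw_nth_perms3 by blast

lemma bad_if_bad_shape:
  assumes "distinct_adj s" "set s = {0,1,2}" "bad_shape s"
  shows "bad s"
proof -
  have "2 \<le> length s"
    using card_length[of s] assms(2) by simp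
  then show ?thesis
    using assms bad_if_typeI_shape bad_if_typeII_shape bad_if_typeIII_shape bad_if_typeIV_shape
    unfolding bad_shape_def by blast
qed

lemma typeI_shape_map_iff:
  "inj_on \<sigma> (set s) \<Longrightarrow> typeI_shape (map \<sigma> s) \<longleftrightarrow> typeI_shape s"
  by (cases s) (auto simp: typeI_shape_def inj_on_image_mem_iff)

lemma typeII_shape_map_iff:
  assumes "inj_on \<sigma> (set s)"
  shows "typeII_shape (map \<sigma> s) \<longleftrightarrow> typeII_shape s"
proof (cases "s = []")
  case False
  then have "\<sigma> (s ! i) = \<sigma> (last s) \<longleftrightarrow> s ! i = last s" if "i < length s" for i
    using that by (intro inj_on_eq_iff[OF assms]) auto
  with False show ?thesis
    by (simp add: typeII_shape_def last_map)
qed (simp add: typeII_shape_def)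

lemma typeIII_shape_map_iff:
  assumes "inj_on \<sigma> (set s)"
  shows "typeIII_shape (map \<sigma> s) \<longleftrightarrow> typeIII_shape s"
proof
  assume "typeIII_shape (map \<sigma> s)"
  then obtain A B C a b where a: "1 \<le> a"
    and s: "map \<sigma> s = A # rep a [C, B] @ A # C # rep b [B, C]"
    by (auto simp: typeIII_shape_def)
  define t where "t = s ! 0 # rep a [s ! 1, s ! 2] @ s ! 0 # s ! 1 # rep b [s ! 2, s ! 1]"
  obtain a' where a': "a = Suc a'"
    using a by (cases a) auto
  then have "map \<sigma> s = A # C # B # rep a' [C, B] @ A # C # rep b [B, C]"
    using s by (simp add: rep_Suc)
  then have "2 < length s" "s \<noteq> []" "map \<sigma> s ! 0 = A" "map \<sigma> s ! 1 = C" "map \<sigma> s ! 2 = B"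
    by (auto dest: arg_cong[of _ _ length])
  then have "\<sigma> (s ! 0) = A" "\<sigma> (s ! 1) = C" "\<sigma> (s ! 2) = B" "{s ! 0, s ! 1, s ! 2} \<subseteq> set s"
    by (auto intro!: nth_mem)
  then have "set t \<subseteq> set s" "map \<sigma> t = map \<sigma> s"
    using set_rep_subset[of a "[s ! 1, s ! 2]"] set_rep_subset[of b "[s ! 2, s ! 1]"]
    by (auto simp: t_def s map_rep)
  then have "s = t"
    using assms by (metis map_inj_on sup.orderE)
  with a show "typeIII_shape s"
    unfolding typeIII_shape_def t_def by blast
next
  assume "typeIII_shape s"
  then show "typeIII_shape (map \<sigma> s)"
    unfolding typeIII_shape_def by (force simp: map_rep)
qed

lemma typeIV_shape_if_map:
  assumes "bij_betw \<sigma> {0,1,2} {0,1,2}" "set s \<subseteq> {0,1,2}" "typeIV_shape (map \<sigma> s)"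
  shows "typeIV_shape s"
proof -
  obtain p where p: "p \<in> set perms3" "map ((!) p) (map \<sigma> s) \<in> typeIV"
    using assms(3) unfolding typeIV_shape_def by blast
  define q where "q = map ((!) p \<circ> \<sigma>) [0,1,2]"
  have "q \<in> set perms3"
    unfolding q_def by (intro map_in_perms3 bij_betw_trans[OF assms(1) bij_betw_nth_perms3[OF p(1)]])
  moreover have "map ((!) q) s = map ((!) p) (map \<sigma> s)"
    using assms(2) by (auto simp: q_def less_Suc_eq nth_Cons')
  ultimately show ?thesis
    using p(2) unfolding typeIV_shape_def by metis
qed

lemma bad_shape_map_iff:
  assumes "bij_betw \<sigma> {0,1,2} {0,1,2}" "set s \<subseteq> {0,1,2}"
  shows "bad_shape (map \<sigma> s) \<longleftrightarrow> bad_shape s"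
proof -
  have inj: "inj_on \<sigma> (set s)"
    using assms inj_on_subset[OF bij_betw_imp_inj_on] by blast
  define \<tau> where "\<tau> = inv_into {0,1,2} \<sigma>"
  have "bij_betw \<tau> {0,1,2} {0,1,2}"
    unfolding \<tau>_def by (rule bij_betw_inv_into[OF assms(1)])
  moreover have "set (map \<sigma> s) \<subseteq> {0,1,2}"
    using image_mono[OF assms(2), of \<sigma>] bij_betw_imp_surj_on[OF assms(1)] by simp
  moreover have "map \<tau> (map \<sigma> s) = s"
    unfolding map_map \<tau>_def
    by (rule map_idI) (use assms(2) inv_into_f_f[OF bij_betw_imp_inj_on[OF assms(1)]] in auto)
  ultimately have "typeIV_shape (map \<sigma> s) \<longleftrightarrow> typeIV_shape s"
    using typeIV_shape_if_map[OF assms] typeIV_shape_if_map[of \<tau> "map \<sigma> s"] by auto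
  then show ?thesis
    unfolding bad_shape_def
    using typeI_shape_map_iff[OF inj] typeII_shape_map_iff[OF inj] typeIII_shape_map_iff[OF inj] by simp
qed

lemma length_le_9_if_typeIV_shape: "typeIV_shape s \<Longrightarrow> length s \<le> 9"
  unfolding typeIV_shape_def typeIV_def by (auto dest!: arg_cong[of _ _ length])

section \<open>Short strings\<close>

lemma typeIII_shape_iff_bounded:
  "typeIII_shape s \<longleftrightarrow> (\<exists>a\<in>set [1..<length s].
    s = s ! 0 # rep a [s ! 1, s ! 2] @ s ! 0 # s ! 1 # rep ((length s - 2 * a - 3) div 2) [s ! 2, s ! 1])"
  (is "_ \<longleftrightarrow> ?bounded")
proof
  assume "typeIII_shape s"
  then obtain A B C a b where a: "1 \<le> a" and s: "s = A # rep a [C, B] @ A # C # rep b [B, C]"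
    unfolding typeIII_shape_def by blast
  then have "s ! 0 = A" "s ! 1 = C" "s ! 2 = B" "length s = 2 * a + 2 * b + 3"
    by (cases a; simp add: rep_Suc length_rep)+
  with a s show ?bounded
    by (intro bexI[of _ a]) auto
next
  assume ?bounded
  then show "typeIII_shape s"
    unfolding typeIII_shape_def by force
qed

fun ternary_words_after :: "nat \<Rightarrow> nat \<Rightarrow> nat list list" where
  "ternary_words_after x 0 = [[]]"
| "ternary_words_after x (Suc n) =
    concat (map (\<lambda>y. map ((#) y) (ternary_words_after y n)) (filter (\<lambda>y. y \<noteq> x) [0,1,2]))"

lemma mem_ternary_words_after:
  "distinct_adj (x # l) \<Longrightarrow> set l \<subseteq> {0,1,2} \<Longrightarrow> l \<in> set (ternary_words_after x (length l))"
  by (induction l arbitrary: x) (auto simp: distinct_adj_Cons)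

text \<open>By relabelling, a normalized fully ternary string of length 4 to 10 may be assumed to start
  with 0 1; all such strings are enumerated and checked by evaluation.\<close>

lemma good_return_flips_of_short_strings:
  "\<forall>n\<in>set [2..<9]. \<forall>l\<in>set (ternary_words_after 1 n). 2 \<in> set l \<longrightarrow>
    bad_shape (0 # 1 # l) \<or> (\<exists>k\<in>set [1..<n + 2]. (0 # 1 # l) ! k = 0 \<and> \<not> bad_shape (flip k (0 # 1 # l)))"
  unfolding bad_shape_def typeI_shape_def typeII_shape_def typeIII_shape_iff_bounded typeIV_shape_def
  by code_simp

lemma relabelling_to_start_0_1:
  fixes s :: "nat list"
  assumes "distinct_adj s" "set s = {0,1,2}" "2 \<le> length s"
  obtains \<sigma> l where "bij_betw \<sigma> {0,1,2} {0,1,2::nat}" "map \<sigma> s = 0 # 1 # l"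
proof -
  obtain A B l where s: "s = A # B # l"
    using assms(3) by (cases s; cases "tl s") auto
  have "A \<in> {0,1,2}" "B \<in> {0,1,2}"
    unfolding assms(2)[symmetric] by (simp_all add: s)
  then have AB: "A \<noteq> B" "A \<le> 2" "B \<le> 2"
    using assms(1) by (auto simp: s)
  show ?thesis
    using that[OF bij_betw_relabel[OF AB], of "map (relabel A B) l"] AB by (simp add: s relabel_def)
qed

lemma exists_good_return_flip_short:
  assumes "distinct_adj s" "set s = {0,1,2}" "4 \<le> length s" "length s \<le> 10" "\<not> bad_shape s"
  shows "\<exists>k. 0 < k \<and> k < length s \<and> s ! k = s ! 0 \<and> \<not> bad_shape (flip k s)"
proof -
  obtain \<sigma> l where bij: "bij_betw \<sigma> {0,1,2} {0,1,2::nat}" and s': "map \<sigma> s = 0 # 1 # l"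
    using relabelling_to_start_0_1[OF assms(1,2)] assms(3) by auto
  have inj: "inj_on \<sigma> (set s)"
    using bij_betw_imp_inj_on[OF bij] by (rule inj_on_subset) (simp add: assms(2))
  have "set (map \<sigma> s) = {0,1,2}"
    using bij_betw_imp_surj_on[OF bij] by (simp add: assms(2))
  then have set_01l: "set (0 # 1 # l) = {0,1,2}"
    by (simp only: s')
  have "set l \<subseteq> {0,1,2}" "2 \<in> set l"
    using equalityD1[OF set_01l] equalityD2[OF set_01l] by simp_all
  moreover have "distinct_adj (1 # l)"
    using distinct_adj_mapI[OF assms(1) inj] by (simp add: s' distinct_adj_Cons)
  moreover have "length l \<in> set [2..<9]"
    unfolding set_upt using assms(3,4) length_map[of \<sigma> s] by (simp add: s')
  moreover have "\<not> bad_shape (0 # 1 # l)"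
    using assms(5) bad_shape_map_iff[OF bij, of s] unfolding s' by (simp add: assms(2))
  ultimately obtain k where k: "k \<in> set [1..<length l + 2]" "(0 # 1 # l) ! k = 0"
    "\<not> bad_shape (flip k (0 # 1 # l))"
    using good_return_flips_of_short_strings mem_ternary_words_after by blast
  have k_bounds: "0 < k" "k < length s"
    using k(1) length_map[of \<sigma> s] unfolding set_upt s' by simp_all
  have "map \<sigma> s ! k = map \<sigma> s ! 0"
    using k(2) by (simp add: s')
  then have "\<sigma> (s ! k) = \<sigma> (s ! 0)"
    using k_bounds(2) by (cases s; cases k) auto
  moreover have "s ! k \<in> set s" "s ! 0 \<in> set s"
    using k_bounds by (simp, metis gr_implies_not0 nth_mem neq0_conv)
  ultimately have "s ! k = s ! 0"
    by (rule inj_onD[OF inj])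
  moreover have "\<not> bad_shape (flip k s)"
    using k(3) bad_shape_map_iff[OF bij, of "flip k s"] flip_map[OF inj, of k]
    unfolding s' by (simp add: assms(2))
  ultimately show ?thesis
    using k_bounds by auto
qed

section \<open>Long strings\<close>

lemma nth_eq_iff_two_occurrences:
  assumes "x \<notin> set u" "x \<notin> set v" "i < length (x # u @ x # v)"
  shows "(x # u @ x # v) ! i = x \<longleftrightarrow> i = 0 \<or> i = Suc (length u)"
proof -
  have "u ! j \<noteq> x" if "j < length u" for j
    using assms(1) nth_mem[OF that] by auto
  moreover have "v ! j \<noteq> x" if "j < length v" for j
    using assms(2) nth_mem[OF that] by auto
  ultimately show ?thesis
    using assms(3) by (cases i) (auto simp: nth_append nth_Cons' split: if_splits)
qed

lemma typeIII_shape_alternating: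
  assumes "distinct_adj t" "set t = {0,1,2}" "typeIII_shape t"
  obtains \<alpha> \<beta> where "1 \<le> \<alpha>" "t ! 0 \<noteq> t ! 1" "t ! 0 \<noteq> t ! 2" "t ! 1 \<noteq> t ! 2"
    "t = t ! 0 # alternating (t ! 1) (t ! 2) (2 * \<alpha>) @ t ! 0 # alternating (t ! 1) (t ! 2) (Suc (2 * \<beta>))"
proof -
  obtain A B C \<alpha> \<beta> where \<alpha>: "1 \<le> \<alpha>" and t: "t = A # rep \<alpha> [C, B] @ A # C # rep \<beta> [B, C]"
    using assms(3) unfolding typeIII_shape_def by blast
  have "A \<noteq> B" "A \<noteq> C" "B \<noteq> C"
    using typeIII_shape_distinct[OF assms(2)[unfolded t] assms(1)[unfolded t] \<alpha>] by simp_all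
  moreover have t_alt: "t = A # alternating C B (2 * \<alpha>) @ A # alternating C B (Suc (2 * \<beta>))"
    by (simp add: t alternating_double)
  moreover have "t ! 0 = A" "t ! 1 = C" "t ! 2 = B"
    using \<alpha> by (auto simp: t_alt nth_append nth_alternating)
  ultimately show ?thesis
    using that[OF \<alpha>] by simp
qed

lemma typeIII_shape_returns:
  assumes "distinct_adj t" "set t = {0,1,2}" "typeIII_shape t"
  obtains m where "0 < m" "Suc m < length t" "t ! Suc m = t ! 1" "last t = t ! 1"
    "\<And>i. i < length t \<Longrightarrow> t ! i = t ! 0 \<longleftrightarrow> i = 0 \<or> i = m"
proof -
  obtain \<alpha> \<beta> where \<alpha>: "1 \<le> \<alpha>" and d: "t ! 0 \<noteq> t ! 1" "t ! 0 \<noteq> t ! 2"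
    and t: "t = t ! 0 # alternating (t ! 1) (t ! 2) (2 * \<alpha>) @ t ! 0 # alternating (t ! 1) (t ! 2) (Suc (2 * \<beta>))"
    using assms by (rule typeIII_shape_alternating)
  define A C u v where "A = t ! 0" "C = t ! 1" "u = alternating (t ! 1) (t ! 2) (2 * \<alpha>)"
    "v = alternating (t ! 1) (t ! 2) (Suc (2 * \<beta>))"
  have t_uv: "t = A # u @ A # v"
    using t by (simp only: A_C_u_v_def)
  have "A \<notin> set u" "A \<notin> set v"
    using d set_alternating_subset[of "t ! 1" "t ! 2"] by (auto simp: A_C_u_v_def simp del: alternating.simps)
  moreover have v: "last v = C" "v ! 0 = C" "v \<noteq> []"
    by (simp_all add: A_C_u_v_def last_alternating nth_alternating del: alternating.simps)
  then have "last t = C" "t ! Suc (Suc (length u)) = C" "Suc (Suc (length u)) < length t"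
    by (simp_all add: t_uv nth_append)
  ultimately show ?thesis
    using that[of "Suc (length u)"] nth_eq_iff_two_occurrences[of A u v]
    unfolding A_C_u_v_def(1,2)[symmetric] t_uv[symmetric] by simp
qed

text \<open>In the locale, \<open>alternating p q L\<close> is the part of \<open>s\<close> before the first return of \<open>a\<close>.\<close>

locale all_return_flips_bad =
  fixes s :: "nat list" and a p q L :: nat and w :: "nat list"
  assumes distinct_adj_s: "distinct_adj s" and set_s: "set s = {0,1,2}" and long: "11 \<le> length s"
    and return_flip_bad: "\<And>u w'. s = a # u @ a # w' \<Longrightarrow> bad_shape (rev u @ a # w')"
    and symbols: "a \<noteq> p" "a \<noteq> q" "p \<noteq> q" "\<And>z. z \<in> set s \<Longrightarrow> z = a \<or> z = p \<or> z = q"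
    and s_eq: "s = a # alternating p q L @ a # w" and L_pos: "0 < L"
begin

lemma set_w: "z \<in> set w \<Longrightarrow> z = a \<or> z = p \<or> z = q"
  using symbols(4) by (simp add: s_eq)

lemma distinct_adj_a_w: "distinct_adj (a # w)"
  using distinct_adj_s distinct_adj_appendD2[of "a # alternating p q L"] by (simp add: s_eq)

lemma return_flip_props:
  assumes "s = a # u @ a # w'"
  shows "distinct_adj (rev u @ a # w')" "set (rev u @ a # w') = {0,1,2}"
    "length (rev u @ a # w') = length s - 1"
  using distinct_adj_flip[of "Suc (length u)" s] set_flip[of "Suc (length u)" s] set_s
    flip_at_return[OF distinct_adj_s[unfolded assms]] by (simp_all add: assms)

text \<open>A long return flip of neither type I nor type II shape has type III shape; all the
  contradictions below come from this.\<close>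

lemma return_flip_returns:
  assumes "s = a # u @ a # w'" "t = rev u @ a # w'" "hd t \<in> set (tl t)"
    "i < length t" "even (length t - 1 - i)" "t ! i \<noteq> last t"
  obtains m where "0 < m" "Suc m < length t" "t ! Suc m = t ! 1" "last t = t ! 1"
    "\<And>j. j < length t \<Longrightarrow> t ! j = t ! 0 \<longleftrightarrow> j = 0 \<or> j = m"
proof -
  have t: "distinct_adj t" "set t = {0,1,2}" "10 \<le> length t"
    using return_flip_props[OF assms(1)] long by (simp_all add: assms(2))
  have "\<not> typeI_shape t" "\<not> typeII_shape t" "\<not> typeIV_shape t"
    using assms(3-6) length_le_9_if_typeIV_shape[of t] t(3) by (auto simp: typeI_shape_def typeII_shape_def)
  then have "typeIII_shape t"
    using return_flip_bad[OF assms(1)] by (simp add: assms(2) bad_shape_def)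
  with t that show ?thesis
    by (elim typeIII_shape_returns) blast+
qed

lemma return_flip_last:
  assumes "s = a # u @ a # w'" "t = rev u @ a # w'" "hd t \<in> set (tl t)"
    "i < length t" "even (length t - 1 - i)" "t ! i \<noteq> last t"
  shows "last t = t ! 1"
  using assms by (rule return_flip_returns)

lemma return_flip_unique_return:
  assumes "s = a # u @ a # w'" "t = rev u @ a # w'" "hd t \<in> set (tl t)"
    "i < length t" "even (length t - 1 - i)" "t ! i \<noteq> last t"
    and "0 < j" "j < k" "k < length t" "t ! j = t ! 0"
  shows "t ! k \<noteq> t ! 0"
  using assms(1-6)
proof (rule return_flip_returns)
  fix m
  assume "\<And>j. j < length t \<Longrightarrow> t ! j = t ! 0 \<longleftrightarrow> j = 0 \<or> j = m"
  then show ?thesis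
    using assms(7-10) by (metis less_trans not_less_zero order.strict_iff_not)
qed

lemma return_flip_after_return:
  assumes "s = a # u @ a # w'" "t = rev u @ a # w'" "hd t \<in> set (tl t)"
    "i < length t" "even (length t - 1 - i)" "t ! i \<noteq> last t"
    and "0 < j" "j < length t" "t ! j = t ! 0"
  shows "t ! Suc j = t ! 1"
  using assms(1-6)
proof (rule return_flip_returns)
  fix m
  assume "t ! Suc m = t ! 1" "\<And>j. j < length t \<Longrightarrow> t ! j = t ! 0 \<longleftrightarrow> j = 0 \<or> j = m"
  then show ?thesis
    using assms(7-9) by auto
qed

lemma alternating_if_avoids:
  assumes "y = p \<and> z = q \<or> y = q \<and> z = p" "y \<notin> set w" "w \<noteq> []"
  shows "w = alternating z a (length w)"
proof (rule alternating_unique)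
  have mem: "x = z \<or> x = a" if "x \<in> set w" for x
    using assms(1,2) that set_w[OF that] by auto
  then show "set w \<subseteq> {z, a}"
    by blast
  show "hd w = z"
    using mem[of "hd w"] distinct_adj_a_w assms(3) by (auto simp: distinct_adj_Cons)
qed (use assms(3) distinct_adj_a_w distinct_adj_ConsD in auto)

lemma bad_shape_if_typeI_L1:
  assumes "L = 1" "typeI_shape (rev (alternating p q L) @ a # w)"
  shows "bad_shape s"
proof -
  define m where "m = length w"
  have s: "s = a # p # a # w"
    using s_eq assms(1) by simp
  have "p \<notin> set w" "8 \<le> m"
    using assms long by (auto simp: s m_def typeI_shape_def)
  then have w: "w = alternating q a m"
    unfolding m_def by (intro alternating_if_avoids[of p]) auto
  show ?thesis
  proof (cases "even m")
    case True
    then have "typeII_shape (a # p # alternating a q (Suc m))"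
      by (intro typeII_shape_Cons_Cons_alternating) simp
    then show ?thesis
      by (simp add: bad_shape_def s w)
  next
    case False
    define r where "r = m - 3"
    have r: "m = Suc (Suc (Suc r))" "even r"
      unfolding r_def using False \<open>8 \<le> m\<close> by presburger+
    define t where "t = rev [p, a, q] @ a # alternating q a (Suc r)"
    have t: "t = q # a # p # a # alternating q a (Suc r)" "last t = q"
      using r by (simp_all add: t_def last_alternating)
    have "s = a # [p, a, q] @ a # alternating q a (Suc r)"
      by (simp add: s w r)
    then have "last t = t ! 1"
      by (rule return_flip_last[OF _ t_def, of 2]) (use r symbols t in auto)
    with t symbols show ?thesis
      by simp
  qed
qed

lemma bad_shape_if_typeI_L2:
  assumes "L = 2" "typeI_shape (rev (alternating p q L) @ a # w)"
  shows "bad_shape s"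
proof -
  define m where "m = length w"
  have s: "s = a # p # q # a # w"
    using s_eq assms(1) by (simp add: numeral_2_eq_2)
  have "q \<notin> set w" "7 \<le> m"
    using assms long by (auto simp: s m_def typeI_shape_def numeral_2_eq_2)
  then have w: "w = alternating p a m"
    unfolding m_def by (intro alternating_if_avoids[of q]) auto
  define r where "r = m - 3"
  have r: "m = Suc (Suc (Suc r))"
    using \<open>7 \<le> m\<close> by (simp add: r_def)
  define t where "t = rev [p, q, a, p] @ a # alternating p a (Suc r)"
  have t: "t = p # a # q # p # a # alternating p a (Suc r)"
    by (simp add: t_def)
  have s': "s = a # [p, q, a, p] @ a # alternating p a (Suc r)"
    by (simp add: s w r)
  have "last t = (if odd r then a else p)"
    by (simp add: t last_alternating)
  then have "t ! 5 \<noteq> t ! 0"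
  proof (cases "odd r")
    case True
    with s' \<open>last t = _\<close> show ?thesis
      by (intro return_flip_unique_return[OF _ t_def, of 2 3]) (use symbols in \<open>auto simp: t\<close>)
  next
    case False
    with s' \<open>last t = _\<close> show ?thesis
      by (intro return_flip_unique_return[OF _ t_def, of 1 3]) (use symbols in \<open>auto simp: t\<close>)
  qed
  then show ?thesis
    by (simp add: t)
qed

lemma bad_shape_if_typeI:
  assumes "typeI_shape (rev (alternating p q L) @ a # w)"
  shows "bad_shape s"
proof -
  consider "L = 1" | "L = 2" | "3 \<le> L"
    using L_pos by linarith
  then show ?thesis
  proof cases
    case 3
    obtain x y where "rev (alternating p q L) = alternating x y L"
      using rev_alternating[of p q L] by metis
    moreover obtain L' where "L = Suc (Suc (Suc L'))"
      using 3 by (intro that[of "L - 3"]) simp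
    ultimately have "rev (alternating p q L) @ a # w = x # y # x # alternating y x L' @ a # w"
      by simp
    with assms show ?thesis
      by (simp add: typeI_shape_def)
  qed (use assms bad_shape_if_typeI_L1 bad_shape_if_typeI_L2 in blast)+
qed

lemma bad_shape_if_typeII_odd:
  assumes "odd L" "typeII_shape (rev (alternating p q L) @ a # w)"
  shows "bad_shape s"
proof -
  define t where "t = alternating p q L @ a # w"
  have II: "t ! i = last t" if "i < length t" "even (length t - 1 - i)" for i
    using assms that by (simp add: t_def typeII_shape_def rev_alternating)
  have s: "s = a # t"
    by (simp add: s_eq t_def)
  have "typeII_shape s"
    unfolding typeII_shape_def
  proof (intro allI impI)
    fix i
    assume i: "i < length s" "even (length s - 1 - i)"
    show "s ! i = last s"
    proof (cases i)
      case 0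
      have "t ! L = a" "L < length t" "even (length t - 1 - L)"
        using i assms(1) by (simp_all add: 0 s t_def nth_append)
      with II[of L] 0 show ?thesis
        by (simp add: s t_def)
    next
      case (Suc j)
      with II[of j] i show ?thesis
        by (simp add: s t_def)
    qed
  qed
  then show ?thesis
    by (simp add: bad_shape_def)
qed

lemma typeII_even_first_return_flip:
  assumes "even L" "typeII_shape (rev (alternating p q L) @ a # w)"
  shows "odd (length w)" "\<And>j. j < length w \<Longrightarrow> even j \<Longrightarrow> w ! j = p" "last w = p"
proof -
  define t where "t = alternating q p L @ a # w"
  have II: "t ! i = last t" if "i < length t" "even (length t - 1 - i)" for i
    using assms that by (simp add: t_def typeII_shape_def rev_alternating)
  have L: "2 \<le> L"
    using L_pos assms(1) by presburger
  have t_nth: "t ! i = (if even i then q else p)" if "i < L" for i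
    using that by (simp add: t_def nth_append nth_alternating)
  have "t ! L = a" "length t = L + 1 + length w"
    by (simp_all add: t_def nth_append)
  show odd_w: "odd (length w)"
  proof
    assume "even (length w)"
    then have "t ! L = last t" "t ! (L - 2) = last t"
      using II \<open>length t = _\<close> L by simp_all
    then show False
      using t_nth[of "L - 2"] \<open>t ! L = a\<close> L assms(1) symbols by simp
  qed
  have "last t = p"
    using II[of "L - 1"] t_nth[of "L - 1"] \<open>length t = _\<close> odd_w L assms(1) by simp
  then show "last w = p"
    using odd_w by (auto simp: t_def)
  show "w ! j = p" if "j < length w" "even j" for j
    using II[of "L + 1 + j"] that odd_w \<open>last t = p\<close> \<open>length t = _\<close> by (simp add: t_def nth_append)
qed

lemma typeII_even_no_second_return:
  assumes "even L" "typeII_shape (rev (alternating p q L) @ a # w)"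
  shows "a \<notin> set w"
proof
  note w_pattern = typeII_even_first_return_flip[OF assms]
  assume "a \<in> set w"
  then obtain w1 w2 where w: "w = w1 @ a # w2" and "a \<notin> set w1"
    by (blast dest: split_list_first)
  define j where "j = length w1"
  have "odd j"
    using w_pattern(2)[of j] symbols by (auto simp: w j_def nth_append)
  have "distinct_adj w1"
    using distinct_adj_a_w by (simp add: w distinct_adj_append_iff distinct_adj_Cons)
  moreover have "set w1 \<subseteq> {p, q}"
    using \<open>a \<notin> set w1\<close> set_w by (auto simp: w)
  moreover have "w1 \<noteq> []" "hd w1 = p"
    using \<open>odd j\<close> w_pattern(2)[of 0] by (auto simp: j_def w hd_conv_nth nth_append)
  ultimately have w1: "w1 = alternating p q j"
    unfolding j_def by (intro alternating_unique) auto
  have "odd (length w2)"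
    using w_pattern(1) \<open>odd j\<close> by (simp add: w j_def)
  then have w2: "w2 ! 0 = p" "last w2 = p" "w2 \<noteq> []"
    using w_pattern(2)[of "Suc j"] w_pattern(3) \<open>odd j\<close> by (auto simp: w j_def nth_append)
  define t2 where "t2 = rev (alternating p q L @ a # w1) @ a # w2"
  have t2: "t2 = alternating p q j @ a # alternating q p L @ a # w2"
    using \<open>odd j\<close> assms(1) by (simp add: t2_def w1 rev_alternating)
  have "2 \<le> L"
    using L_pos assms(1) by presburger
  have "s = a # (alternating p q L @ a # w1) @ a # w2"
    by (simp add: s_eq w)
  then have "t2 ! (j + L + 2) \<noteq> t2 ! 0"
  proof (rule return_flip_unique_return[OF _ t2_def, of j "j + 2"])
    show "hd t2 \<in> set (tl t2)" "t2 ! j \<noteq> last t2" "t2 ! (j + 2) = t2 ! 0"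
      using \<open>odd j\<close> odd_pos[OF \<open>odd j\<close>] \<open>2 \<le> L\<close> w2 symbols
      by (auto simp: t2 nth_append nth_alternating hd_conv_nth)
  qed (use \<open>odd j\<close> \<open>2 \<le> L\<close> assms(1) \<open>odd (length w2)\<close> w2 in \<open>auto simp: t2\<close>)
  with odd_pos[OF \<open>odd j\<close>] w2 show False
    by (auto simp: t2 nth_append nth_alternating)
qed

lemma bad_shape_if_typeII_even:
  assumes "even L" "typeII_shape (rev (alternating p q L) @ a # w)"
  shows "bad_shape s"
proof -
  note w_pattern = typeII_even_first_return_flip[OF assms]
  have "w \<noteq> []"
    using w_pattern(1) by auto
  then have "hd w = p"
    using w_pattern(2)[of 0] by (simp add: hd_conv_nth)
  moreover have "set w \<subseteq> {p, q}"
    using typeII_even_no_second_return[OF assms] set_w by blast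
  moreover have "distinct_adj w"
    by (rule distinct_adj_ConsD[OF distinct_adj_a_w])
  ultimately have "w = alternating p q (length w)"
    using \<open>w \<noteq> []\<close> by (intro alternating_unique) auto
  moreover obtain \<beta> where "length w = Suc (2 * \<beta>)"
    using w_pattern(1) by (auto elim!: oddE)
  moreover obtain \<alpha> where \<alpha>: "L = 2 * \<alpha>" "1 \<le> \<alpha>"
    using assms(1) L_pos by (auto elim!: evenE)
  ultimately have "s = a # rep \<alpha> [p, q] @ a # p # rep \<beta> [q, p]"
    by (simp add: s_eq alternating_double)
  with \<alpha> show ?thesis
    unfolding bad_shape_def typeIII_shape_def by blast
qed

lemma first_return_flip_props:
  "distinct_adj (rev (alternating p q L) @ a # w)" "set (rev (alternating p q L) @ a # w) = {0,1,2}"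
  "10 \<le> length (rev (alternating p q L) @ a # w)"
  using return_flip_props[OF s_eq] long by simp_all

lemma bad_shape_if_typeIII_L1:
  assumes "L = 1" "typeIII_shape (rev (alternating p q L) @ a # w)"
  shows "bad_shape s"
proof -
  define t where "t = rev (alternating p q L) @ a # w"
  have t: "t = p # a # w"
    by (simp add: t_def assms(1))
  obtain \<alpha> \<beta> where \<alpha>: "1 \<le> \<alpha>" and d: "t ! 0 \<noteq> t ! 1" "t ! 0 \<noteq> t ! 2" "t ! 1 \<noteq> t ! 2"
    and t_alt: "t = t ! 0 # alternating (t ! 1) (t ! 2) (2 * \<alpha>) @ t ! 0 # alternating (t ! 1) (t ! 2) (Suc (2 * \<beta>))"
    using first_return_flip_props(1,2) assms(2) unfolding t_def[symmetric] by (rule typeIII_shape_alternating)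
  have "t ! 2 \<in> set s"
    unfolding set_s first_return_flip_props(2)[folded t_def, symmetric]
    using first_return_flip_props(3) by (intro nth_mem) (simp add: t_def)
  then have "t ! 0 = p" "t ! 1 = a" "t ! 2 = q"
    using d symbols(4) by (auto simp: t)
  with t_alt have "t = p # alternating a q (2 * \<alpha>) @ p # alternating a q (Suc (2 * \<beta>))"
    by simp
  moreover have "s = a # t"
    by (simp add: s_eq assms(1) t)
  ultimately have s': "s = a # (p # alternating a q (2 * \<alpha>) @ [p]) @ a # alternating q a (2 * \<beta>)"
    by simp
  define t2 where "t2 = rev (p # alternating a q (2 * \<alpha>) @ [p]) @ a # alternating q a (2 * \<beta>)"
  have t2: "t2 = p # alternating q a (2 * \<alpha>) @ p # a # alternating q a (2 * \<beta>)"
    by (simp add: t2_def rev_alternating)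
  have "last (a # alternating q a (2 * \<beta>)) = a"
    by (cases \<beta>) (simp_all add: last_alternating del: alternating.simps)
  then have "last t2 = a"
    by (simp add: t2)
  from s' have "t2 ! Suc (Suc (2 * \<alpha>)) = t2 ! 1"
  proof (rule return_flip_after_return[OF _ t2_def, of 0])
    show "hd t2 \<in> set (tl t2)" "t2 ! 0 \<noteq> last t2"
      using \<open>last t2 = a\<close> symbols by (simp_all add: t2)
  qed (use \<open>last t2 = a\<close> in \<open>simp_all add: t2 nth_append\<close>)
  with \<alpha> symbols show ?thesis
    by (auto simp: t2 nth_append nth_alternating)
qed

lemma typeIII_L2_long_block_impossible:
  assumes "L = 2" "w = p # a # alternating p a (2 * g) @ q # alternating p a (Suc (2 * \<beta>))"
  shows False
proof -
  define t2 where "t2 = rev [p, q, a, p] @ a # alternating p a (2 * g) @ q # alternating p a (Suc (2 * \<beta>))"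
  have "s = a # [p, q, a, p] @ a # alternating p a (2 * g) @ q # alternating p a (Suc (2 * \<beta>))"
    using assms by (simp add: s_eq numeral_2_eq_2)
  then have "t2 ! (2 * g + 6) \<noteq> t2 ! 0"
  proof (rule return_flip_unique_return[OF _ t2_def, of 2 3])
    show "hd t2 \<in> set (tl t2)" "t2 ! 2 \<noteq> last t2" "t2 ! 3 = t2 ! 0"
      using symbols by (simp_all add: t2_def last_alternating del: alternating.simps)
  qed (simp_all add: t2_def)
  then show False
    by (simp add: t2_def nth_append)
qed

lemma typeIII_L2_short_block_impossible:
  assumes "L = 2" "w = q # p # a # alternating p a (Suc (2 * g))"
  shows False
proof -
  define t2 where "t2 = rev [p, q, a, q, p] @ a # alternating p a (Suc (2 * g))"
  have "s = a # [p, q, a, q, p] @ a # alternating p a (Suc (2 * g))"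
    using assms by (simp add: s_eq numeral_2_eq_2)
  then have "t2 ! 6 \<noteq> t2 ! 0"
  proof (rule return_flip_unique_return[OF _ t2_def, of 2 4])
    show "hd t2 \<in> set (tl t2)" "t2 ! 2 \<noteq> last t2" "t2 ! 4 = t2 ! 0"
      using symbols by (simp_all add: t2_def last_alternating del: alternating.simps)
  qed (simp_all add: t2_def)
  then show False
    by (simp add: t2_def)
qed

lemma bad_shape_if_typeIII_L2:
  assumes "L = 2" "typeIII_shape (rev (alternating p q L) @ a # w)"
  shows "bad_shape s"
proof -
  define t where "t = rev (alternating p q L) @ a # w"
  have t: "t = q # p # a # w"
    by (simp add: t_def assms(1) numeral_2_eq_2)
  obtain \<alpha> \<beta> where \<alpha>: "1 \<le> \<alpha>"
    and t_alt: "t = t ! 0 # alternating (t ! 1) (t ! 2) (2 * \<alpha>) @ t ! 0 # alternating (t ! 1) (t ! 2) (Suc (2 * \<beta>))"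
    using first_return_flip_props(1,2) assms(2) unfolding t_def[symmetric] by (rule typeIII_shape_alternating)
  then have w: "q # p # a # w = q # alternating p a (2 * \<alpha>) @ q # alternating p a (Suc (2 * \<beta>))"
    by (simp add: t)
  show ?thesis
  proof (cases "2 \<le> \<alpha>")
    case True
    then have "2 * \<alpha> = Suc (Suc (Suc (Suc (2 * (\<alpha> - 2)))))"
      by simp
    with w have "w = p # a # alternating p a (2 * (\<alpha> - 2)) @ q # alternating p a (Suc (2 * \<beta>))"
      by simp
    with typeIII_L2_long_block_impossible[OF assms(1)] show ?thesis
      by blast
  next
    case False
    with \<alpha> have "\<alpha> = 1"
      by simp
    with w have w1: "w = q # alternating p a (Suc (2 * \<beta>))"
      by (simp add: numeral_2_eq_2)
    then obtain g where "\<beta> = Suc g"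
      using first_return_flip_props(3) by (cases \<beta>) (simp_all add: assms(1) numeral_2_eq_2)
    with w1 have "w = q # p # a # alternating p a (Suc (2 * g))"
      by simp
    with typeIII_L2_short_block_impossible[OF assms(1)] show ?thesis
      by blast
  qed
qed

lemma bad_shape_if_typeIII:
  assumes "typeIII_shape (rev (alternating p q L) @ a # w)"
  shows "bad_shape s"
proof -
  consider "L = 1" | "L = 2" | "3 \<le> L"
    using L_pos by linarith
  then show ?thesis
  proof cases
    case 3
    obtain x y where "rev (alternating p q L) = alternating x y L"
      using rev_alternating[of p q L] by metis
    moreover obtain L' where "L = Suc (Suc (Suc L'))"
      using 3 by (intro that[of "L - 3"]) simp
    ultimately have "(rev (alternating p q L) @ a # w) ! 0 = (rev (alternating p q L) @ a # w) ! 2"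
      by simp
    moreover have "(rev (alternating p q L) @ a # w) ! 0 \<noteq> (rev (alternating p q L) @ a # w) ! 2"
      using first_return_flip_props(1,2) assms by (rule typeIII_shape_alternating)
    ultimately show ?thesis
      by blast
  qed (use assms bad_shape_if_typeIII_L1 bad_shape_if_typeIII_L2 in blast)+
qed

lemma bad_shape_s: "bad_shape s"
proof -
  have "bad_shape (rev (alternating p q L) @ a # w)"
    by (rule return_flip_bad[OF s_eq])
  moreover have "\<not> typeIV_shape (rev (alternating p q L) @ a # w)"
    using length_le_9_if_typeIV_shape first_return_flip_props(3) by fastforce
  ultimately consider "typeI_shape (rev (alternating p q L) @ a # w)"
    | "typeII_shape (rev (alternating p q L) @ a # w)"
    | "typeIII_shape (rev (alternating p q L) @ a # w)"
    unfolding bad_shape_def by blast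
  then show ?thesis
    using bad_shape_if_typeI bad_shape_if_typeII_odd bad_shape_if_typeII_even bad_shape_if_typeIII
    by cases blast+
qed

end

lemma first_return_alternating:
  fixes a :: nat
  assumes "distinct_adj (a # u @ a # w)" "set (a # u @ a # w) = {0,1,2}" "a \<notin> set u"
  obtains p q where "a \<noteq> p" "a \<noteq> q" "p \<noteq> q" "\<And>z. z \<in> set (a # u @ a # w) \<Longrightarrow> z = a \<or> z = p \<or> z = q"
    "u = alternating p q (length u)" "0 < length u"
proof -
  have "u \<noteq> []"
    using assms(1) by auto
  define p where "p = hd u"
  have "p \<in> set u"
    using \<open>u \<noteq> []\<close> by (simp add: p_def)
  have le2: "z \<le> 2" if "z \<in> set (a # u @ a # w)" for z
    using that unfolding assms(2) by auto
  have ap: "a \<noteq> p" "a \<le> 2" "p \<le> 2"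
    using \<open>p \<in> set u\<close> assms(3) le2 by auto
  obtain q where q: "q \<noteq> a" "q \<noteq> p" "\<And>z. z \<le> 2 \<Longrightarrow> z = a \<or> z = p \<or> z = q"
    using third_symbol[OF ap] by blast
  have symbols: "z = a \<or> z = p \<or> z = q" if "z \<in> set (a # u @ a # w)" for z
    using q(3) le2[OF that] by blast
  have "set u \<subseteq> {p, q}"
    using symbols assms(3) by fastforce
  moreover have "distinct_adj u"
    using assms(1) by (simp add: distinct_adj_append_iff distinct_adj_Cons)
  ultimately have "u = alternating p q (length u)"
    using \<open>u \<noteq> []\<close> by (intro alternating_unique) (auto simp: p_def)
  with that[of p q] \<open>a \<noteq> p\<close> q(1,2) symbols \<open>u \<noteq> []\<close> show ?thesis
    by auto
qed

lemma bad_shape_if_all_return_flips_bad: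
  assumes "distinct_adj s" "set s = {0,1,2}" "11 \<le> length s"
    and flips_bad: "\<And>k. 0 < k \<Longrightarrow> k < length s \<Longrightarrow> s ! k = s ! 0 \<Longrightarrow> bad_shape (flip k s)"
  shows "bad_shape s"
proof -
  obtain a s' where s: "s = a # s'"
    using assms(3) by (cases s) auto
  show ?thesis
  proof (cases "a \<in> set s'")
    case False
    with s assms(3) show ?thesis
      by (simp add: bad_shape_def typeI_shape_def)
  next
    case True
    then obtain u w where s': "s = a # u @ a # w" and "a \<notin> set u"
      by (auto simp: s dest: split_list_first)
    obtain p q where symbols: "a \<noteq> p" "a \<noteq> q" "p \<noteq> q" "\<And>z. z \<in> set s \<Longrightarrow> z = a \<or> z = p \<or> z = q"
      and u: "u = alternating p q (length u)" "0 < length u"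
      using first_return_alternating[OF assms(1,2)[unfolded s'] \<open>a \<notin> set u\<close>] unfolding s'[symmetric]
      by blast
    have "bad_shape (rev v @ a # w')" if "s = a # v @ a # w'" for v w'
      using flips_bad[of "Suc (length v)"] flip_at_return[of a v w'] assms(1) that
      by (simp add: nth_append)
    moreover have "s = a # alternating p q (length u) @ a # w"
      using s' u(1) by simp
    ultimately interpret all_return_flips_bad s a p q "length u" w
      using assms(1-3) symbols u(2) by unfold_locales
    show ?thesis
      by (rule bad_shape_s)
  qed
qed

section \<open>Grouping distance\<close>

lemma exists_good_return_flip:
  assumes "distinct_adj s" "set s = {0,1,2}" "4 \<le> length s" "\<not> bad_shape s"
  shows "\<exists>k. 0 < k \<and> k < length s \<and> s ! k = s ! 0 \<and> \<not> bad_shape (flip k s)"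
proof (cases "length s \<le> 10")
  case True
  with assms show ?thesis
    by (intro exists_good_return_flip_short)
next
  case False
  with assms bad_shape_if_all_return_flips_bad[of s] show ?thesis
    by fastforce
qed

lemma length_flip_at_return:
  assumes "distinct_adj s" "0 < k" "k < length s" "s ! k = s ! 0"
  shows "length (flip k s) = length s - 1"
proof -
  obtain b u w where "s = b # u @ b # w" "k = Suc (length u)"
    using assms(2-4) by (rule return_decomposition)
  with assms(1) flip_at_return[of b u w] show ?thesis
    by simp
qed

lemma reach_length_3:
  assumes "distinct_adj s" "set s = {0,1,2}" "\<not> bad_shape s"
  shows "\<exists>t. reach s (length s - 3) t \<and> length t = 3"
  using assms
proof (induction "length s" arbitrary: s)
  case 0
  then show ?case
    using card_length[of s] by simp
next
  case (Suc n)
  show ?case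
  proof (cases "length s = 3")
    case False
    then have "4 \<le> length s"
      using card_length[of s] Suc.prems(2) by simp
    then obtain k where k: "0 < k" "k < length s" "s ! k = s ! 0" "\<not> bad_shape (flip k s)"
      using exists_good_return_flip Suc.prems by blast
    moreover have "length (flip k s) = n"
      using length_flip_at_return[OF Suc.prems(1) k(1-3)] Suc.hyps(2) by simp
    ultimately obtain t where "reach (flip k s) (n - 3) t" "length t = 3"
      using Suc.hyps(1)[of "flip k s"] Suc.prems(2) distinct_adj_flip by auto
    moreover have "length s - 3 = Suc (n - 3)"
      using \<open>4 \<le> length s\<close> Suc.hyps(2) by simp
    ultimately show ?thesis
      using k(1,2) by (auto intro!: exI[of _ k])
  qed (auto intro!: exI[of _ s])
qed

theorem lemma3p5:
  fixes s :: "nat list" and n :: nat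
  assumes "normalized s" and "fully_kary 3 s" and "length s = n" and "good s"
  shows "grouping_distance 3 s = n - 3"
proof -
  have "{0..<3} = {0,1,2::nat}"
    by auto
  then have s: "distinct_adj s" "set s = {0,1,2}"
    using assms(1,2) by (simp_all add: normalized_iff_distinct_adj fully_kary_def)
  then have "\<not> bad_shape s"
    using assms(4) bad_if_bad_shape unfolding good_def by blast
  then obtain t where "reach s (n - 3) t" "length t = 3"
    using reach_length_3[OF s] assms(3) by blast
  moreover have "n - 3 \<le> m" if "reach s m t'" "length t' = 3" for m t'
    using reach_length_ge[OF s(1) that(1)] that(2) assms(3) by simp
  ultimately show ?thesis
    unfolding grouping_distance_def by (intro Least_equality) blast+
qed

end
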